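(* Let $X$ be a real normed linear space which admits a predual ${}^*X$ (a normed space with $({}^*X)^* \simeq X$), and let $S \subset X$ be a closed subspace. Then the statement "for every $y \in X$, the infimum $\inf_{x \in S} \|y - x\|$ is attained by some $x\in S$ and \[ \min_{x \in S} \|y - x\| \;=\; \sup_{\substack{\nu \in {}^\perp S \\ \|\nu\| \leq 1}} \langle \nu, y\rangle\text{"} \] holds if and only if $({}^\perp S)^\perp = S$.
   Context: A predual of a normed space $X$ is a normed space ${}^*X$ with $({}^*X)^* \simeq X$; via this isomorphism every $x \in X$ acts on ${}^*X$, with pairing written $\langle \nu, x\rangle$ for $\nu \in {}^*X$, $x \in X$. For $S \subset X$, the pre-annihilator is ${}^\perp S = \{\nu \in {}^*X : \langle \nu, x\rangle = 0 \ \forall x \in S\}$, and for $T \subset {}^*X$ its annihilator is $T^\perp = \{x \in X : \langle \nu, x\rangle = 0 \ \forall \nu \in T\}$ (identifying $({}^*X)^*$ with $X$). One always has $S \subset ({}^\perp S)^\perp$. *)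

theory Defs
  imports "HOL-Analysis.Analysis"
begin

(* A predual of X is modelled by a normed space 'y together with an isometric linear
  isomorphism T from X onto the dual space of bounded linear functionals on 'y.
  The pairing of nu with x is blinfun_apply (T x) nu. *)

definition is_predual_iso :: "('x::real_normed_vector \<Rightarrow> ('y::real_normed_vector \<Rightarrow>\<^sub>L real)) \<Rightarrow> bool" where
  "is_predual_iso T \<longleftrightarrow> linear T \<and> bij T \<and> (\<forall>x. norm (T x) = norm x)"

definition pre_annihilator ::
  "('x \<Rightarrow> ('y::real_normed_vector \<Rightarrow>\<^sub>L real)) \<Rightarrow> 'x set \<Rightarrow> 'y set" where
  "pre_annihilator T S = {\<nu>. \<forall>x\<in>S. blinfun_apply (T x) \<nu> = 0}"

definition annihilator ::
  "('x \<Rightarrow> ('y::real_normed_vector \<Rightarrow>\<^sub>L real)) \<Rightarrow> 'y set \<Rightarrow> 'x set" where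
  "annihilator T A = {x. \<forall>\<nu>\<in>A. blinfun_apply (T x) \<nu> = 0}"

end

theory Submission
  imports Defs
begin

text \<open>For \<open>\<nu> \<in> \<^sup>\<bottom>S\<close> with \<open>\<parallel>\<nu>\<parallel> \<le> 1\<close> and \<open>x \<in> S\<close> we have \<open>\<langle>\<nu>, y\<rangle> = \<langle>\<nu>, y - x\<rangle> \<le> \<parallel>y - x\<parallel>\<close>,
  so the supremum never exceeds the distance. By Hahn-Banach, the restriction of \<open>T y\<close> to
  \<open>\<^sup>\<bottom>S\<close> extends to a functional whose norm is that supremum; it is \<open>T z\<close> for some \<open>z\<close>,
  and \<open>y - z\<close> annihilates \<open>\<^sup>\<bottom>S\<close>. If \<open>S = (\<^sup>\<bottom>S)\<^sup>\<bottom>\<close>, then \<open>y - z\<close> is a best approximation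
  realising the supremum. Conversely, for \<open>y \<in> (\<^sup>\<bottom>S)\<^sup>\<bottom>\<close> the supremum is \<open>0\<close>, so \<open>y\<close> equals its
  best approximation in \<open>S\<close>.\<close>

definition sublinear :: "('a::real_vector \<Rightarrow> real) \<Rightarrow> bool" where
  "sublinear p \<longleftrightarrow> (\<forall>x y. p (x + y) \<le> p x + p y) \<and> (\<forall>a x. 0 \<le> a \<longrightarrow> p (a *\<^sub>R x) = a * p x)"

lemma sublinearD:
  assumes "sublinear p"
  shows sublinear_add: "p (x + y) \<le> p x + p y"
    and sublinear_scale: "0 \<le> a \<Longrightarrow> p (a *\<^sub>R x) = a * p x"
  using assms unfolding sublinear_def by blast+

lemma sublinear_scaled_norm: "0 \<le> c \<Longrightarrow> sublinear (\<lambda>v. c * norm v)"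
  unfolding sublinear_def by (auto simp: norm_triangle_ineq distrib_left[symmetric] intro: mult_left_mono)

text \<open>This is where sublinearity enters: \<open>s + q \<le> p (u + w) \<le> p (u - y) + p (w + y)\<close>
  for \<open>(u, s), (w, q) \<in> G\<close>, so a value \<open>a\<close> fits between the two families.\<close>

lemma sublinear_gap_value:
  assumes p: "sublinear p" and G: "subspace G" and dom: "\<forall>(v, r)\<in>G. r \<le> p v"
  shows "\<exists>a. (\<forall>(u, s)\<in>G. s - p (u - y) \<le> a) \<and> (\<forall>(w, q)\<in>G. a \<le> p (w + y) - q)"
proof -
  have gap: "s - p (u - y) \<le> p (w + y) - q" if "(u, s) \<in> G" "(w, q) \<in> G" for u s w q
  proof -
    have "s + q \<le> p (u + w)"
      using dom subspace_add[OF G that] by auto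
    also have "\<dots> \<le> p (u - y) + p (w + y)"
      using sublinear_add[OF p, of "u - y" "w + y"] by simp
    finally show ?thesis by simp
  qed
  have "(0, 0) \<in> G"
    using subspace_0[OF G] by (simp add: zero_prod_def)
  define L where "L = (\<lambda>(u, s). s - p (u - y)) ` G"
  have L_ne: "L \<noteq> {}" and L_bdd: "bdd_above L"
    using \<open>(0, 0) \<in> G\<close> gap[OF _ \<open>(0, 0) \<in> G\<close>] unfolding L_def bdd_above_def
    by (auto intro!: exI[of _ "p y"])
  have "\<forall>(u, s)\<in>G. s - p (u - y) \<le> Sup L"
    unfolding L_def using L_bdd[unfolded L_def] by (auto intro: cSup_upper)
  moreover have "Sup L \<le> p (w + y) - q" if "(w, q) \<in> G" for w q
    using that gap by (intro cSup_least[OF L_ne]) (auto simp: L_def)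
  ultimately show ?thesis
    by blast
qed

lemma sublinear_extension_value:
  assumes p: "sublinear p" and G: "subspace G" and dom: "\<forall>(v, r)\<in>G. r \<le> p v"
  shows "\<exists>a. \<forall>(v, r)\<in>G. \<forall>t. r + t * a \<le> p (v + t *\<^sub>R y)"
proof -
  obtain a where lower: "\<And>u s. (u, s) \<in> G \<Longrightarrow> s - p (u - y) \<le> a"
    and upper: "\<And>w q. (w, q) \<in> G \<Longrightarrow> a \<le> p (w + y) - q"
    using sublinear_gap_value[OF p G dom, of y] by blast
  have G_scale: "(c *\<^sub>R v, c * r) \<in> G" if "(v, r) \<in> G" for c v r
    using subspace_scale[OF G that, of c] by simp
  have "r + t * a \<le> p (v + t *\<^sub>R y)" if "(v, r) \<in> G" for v r t
  proof -
    consider "t = 0" | "t > 0" | "t < 0" by linarith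
    then show ?thesis
    proof cases
      case 1
      then show ?thesis using dom that by auto
    next
      case 2
      have "a \<le> p (inverse t *\<^sub>R v + y) - inverse t * r"
        using upper[OF G_scale[OF that]] .
      then have "t * a \<le> t * p (inverse t *\<^sub>R v + y) - r"
        using 2 by (simp add: field_simps)
      also have "t * p (inverse t *\<^sub>R v + y) = p (v + t *\<^sub>R y)"
        using sublinear_scale[OF p, of t "inverse t *\<^sub>R v + y"] 2
        by (simp add: scaleR_add_right)
      finally show ?thesis by simp
    next
      case 3
      have "inverse (- t) * r - p (inverse (- t) *\<^sub>R v - y) \<le> a"
        using lower[OF G_scale[OF that]] .
      then have "r - (- t) * p (inverse (- t) *\<^sub>R v - y) \<le> - t * a"
        using 3 by (simp add: field_simps)
      also have "(- t) * p (inverse (- t) *\<^sub>R v - y) = p (v + t *\<^sub>R y)"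
        using sublinear_scale[OF p, of "- t" "inverse (- t) *\<^sub>R v - y"] 3
        by (simp add: scaleR_diff_right)
      finally show ?thesis by simp
    qed
  qed
  then show ?thesis by blast
qed

text \<open>A subspace of \<open>'a \<times> real\<close> that is single-valued is the graph of a linear functional
  on the subspace \<open>Domain G\<close>.\<close>

definition dominated_extension ::
  "('a::real_vector \<Rightarrow> real) \<Rightarrow> 'a set \<Rightarrow> ('a \<Rightarrow> real) \<Rightarrow> ('a \<times> real) set \<Rightarrow> bool" where
  "dominated_extension p M f G \<longleftrightarrow>
     subspace G \<and> single_valued G \<and> (\<forall>v\<in>M. (v, f v) \<in> G) \<and> (\<forall>(v, r)\<in>G. r \<le> p v)"

lemma dominated_extension_Union_chain:
  assumes C: "subset.chain {G. dominated_extension p M f G} C" and "C \<noteq> {}"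
  shows "dominated_extension p M f (\<Union>C)"
proof -
  have sub: "subspace G" and sv: "single_valued G" and ext: "\<forall>v\<in>M. (v, f v) \<in> G"
    and bound: "\<forall>(v, r)\<in>G. r \<le> p v" if "G \<in> C" for G
    using C that unfolding subset_chain_def dominated_extension_def by auto
  have common: "\<exists>G\<in>C. x \<in> G \<and> z \<in> G" if "x \<in> \<Union>C" "z \<in> \<Union>C" for x z
  proof -
    have "{x, z} \<subseteq> \<Union>C"
      using that by blast
    then show ?thesis
      using finite_subset_Union_chain[OF _ _ \<open>C \<noteq> {}\<close> C] by (metis finite.emptyI finite_insert insert_subset)
  qed
  obtain G0 where "G0 \<in> C"
    using \<open>C \<noteq> {}\<close> by blast
  have "subspace (\<Union>C)"
    unfolding subspace_def
  proof (intro conjI ballI allI)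
    show "0 \<in> \<Union>C"
      using subspace_0[OF sub[OF \<open>G0 \<in> C\<close>]] \<open>G0 \<in> C\<close> by blast
  next
    fix x z assume "x \<in> \<Union>C" "z \<in> \<Union>C"
    then obtain G where "G \<in> C" "x \<in> G" "z \<in> G"
      using common by blast
    then show "x + z \<in> \<Union>C"
      using subspace_add[OF sub] by blast
  next
    fix c x assume "x \<in> \<Union>C"
    then obtain G where "G \<in> C" "x \<in> G"
      by blast
    then show "c *\<^sub>R x \<in> \<Union>C"
      using subspace_scale[OF sub] by blast
  qed
  moreover have "single_valued (\<Union>C)"
  proof (rule single_valuedI)
    fix v r s assume "(v, r) \<in> \<Union>C" "(v, s) \<in> \<Union>C"
    then obtain G where "G \<in> C" "(v, r) \<in> G" "(v, s) \<in> G"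
      using common by blast
    then show "r = s"
      using single_valuedD[OF sv] by blast
  qed
  moreover have "\<forall>v\<in>M. (v, f v) \<in> \<Union>C"
    using ext \<open>G0 \<in> C\<close> by blast
  moreover have "\<forall>(v, r)\<in>\<Union>C. r \<le> p v"
    using bound by blast
  ultimately show ?thesis
    unfolding dominated_extension_def by blast
qed

definition graph_extension :: "('a::real_vector \<times> real) set \<Rightarrow> 'a \<Rightarrow> real \<Rightarrow> ('a \<times> real) set" where
  "graph_extension G y a = {(v + t *\<^sub>R y, r + t * a) | v r t. (v, r) \<in> G}"

lemma graph_extension_eq_sums: "graph_extension G y a = {g + h | g h. g \<in> G \<and> h \<in> span {(y, a)}}"
proof (intro equalityI subsetI)
  fix x assume "x \<in> graph_extension G y a"
  then obtain v r t where "(v, r) \<in> G" "x = (v, r) + t *\<^sub>R (y, a)"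
    unfolding graph_extension_def by auto
  then show "x \<in> {g + h | g h. g \<in> G \<and> h \<in> span {(y, a)}}"
    unfolding span_singleton by blast
next
  fix x assume "x \<in> {g + h | g h. g \<in> G \<and> h \<in> span {(y, a)}}"
  then obtain g t where "g \<in> G" "x = g + t *\<^sub>R (y, a)"
    unfolding span_singleton by blast
  then show "x \<in> graph_extension G y a"
    unfolding graph_extension_def by (cases g) auto
qed

lemma subspace_graph_extension: "subspace G \<Longrightarrow> subspace (graph_extension G y a)"
  unfolding graph_extension_eq_sums by (intro subspace_sums subspace_span)

lemma graph_extension_superset:
  assumes "subspace G"
  shows "G \<subseteq> graph_extension G y a" and "(y, a) \<in> graph_extension G y a"
proof -
  show "G \<subseteq> graph_extension G y a"
    unfolding graph_extension_def by force
  have "(0, 0) \<in> G"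
    using subspace_0[OF assms] by (simp add: zero_prod_def)
  then show "(y, a) \<in> graph_extension G y a"
    unfolding graph_extension_def by force
qed

lemma single_valued_graph_extension:
  assumes sub: "subspace G" and sv: "single_valued G" and y: "y \<notin> Domain G"
  shows "single_valued (graph_extension G y a)"
proof (rule single_valuedI)
  fix w s1 s2 assume "(w, s1) \<in> graph_extension G y a" "(w, s2) \<in> graph_extension G y a"
  then obtain v1 r1 t1 v2 r2 t2 where
    in1: "(v1, r1) \<in> G" "w = v1 + t1 *\<^sub>R y" "s1 = r1 + t1 * a" and
    in2: "(v2, r2) \<in> G" "w = v2 + t2 *\<^sub>R y" "s2 = r2 + t2 * a"
    unfolding graph_extension_def by blast
  show "s1 = s2"
  proof (cases "t1 = t2")
    case True
    then show ?thesis
      using in1 in2 single_valuedD[OF sv] by auto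
  next
    case False
    have "inverse (t2 - t1) *\<^sub>R ((v1, r1) - (v2, r2)) \<in> G"
      using in1(1) in2(1) by (intro subspace_scale[OF sub] subspace_diff[OF sub])
    moreover have "v1 - v2 = (t2 - t1) *\<^sub>R y"
      using in1(2) in2(2) by (simp add: algebra_simps)
    then have "inverse (t2 - t1) *\<^sub>R (v1 - v2) = y"
      using False by simp
    ultimately have "(y, inverse (t2 - t1) * (r1 - r2)) \<in> G"
      by simp
    with y show ?thesis
      by (blast intro: DomainI)
  qed
qed

lemma dominated_extension_enlarge:
  assumes p: "sublinear p" and G: "dominated_extension p M f G" and y: "y \<notin> Domain G"
  shows "\<exists>G'. dominated_extension p M f G' \<and> G \<subset> G'"
proof -
  have sub: "subspace G" and sv: "single_valued G" and bound: "\<forall>(v, r)\<in>G. r \<le> p v"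
    and M: "\<forall>v\<in>M. (v, f v) \<in> G"
    using G unfolding dominated_extension_def by auto
  obtain a where a: "\<And>v r t. (v, r) \<in> G \<Longrightarrow> r + t * a \<le> p (v + t *\<^sub>R y)"
    using sublinear_extension_value[OF p sub bound, of y] by blast
  have "\<forall>(w, s)\<in>graph_extension G y a. s \<le> p w"
    unfolding graph_extension_def using a by blast
  moreover have "(y, a) \<notin> G"
    using y by (blast intro: DomainI)
  ultimately show ?thesis
    using M graph_extension_superset[OF sub, of y a] subspace_graph_extension[OF sub, of y a]
      single_valued_graph_extension[OF sub sv y, of a]
    unfolding dominated_extension_def by blast
qed

theorem hahn_banach_sublinear:
  assumes p: "sublinear p" and M: "subspace M" and f: "linear f" and dom: "\<forall>v\<in>M. f v \<le> p v"
  shows "\<exists>g. linear g \<and> (\<forall>v\<in>M. g v = f v) \<and> (\<forall>v. g v \<le> p v)"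
proof -
  have "linear (\<lambda>v. (v, f v))"
    using f by (intro linearI) (simp_all add: linear_add linear_scale)
  then have "dominated_extension p M f ((\<lambda>v. (v, f v)) ` M)"
    unfolding dominated_extension_def using M dom
    by (auto intro: linear_subspace_image single_valuedI)
  then have "\<exists>Gm\<in>{G. dominated_extension p M f G}.
      \<forall>G\<in>{G. dominated_extension p M f G}. Gm \<subseteq> G \<longrightarrow> G = Gm"
    by (intro subset_Zorn_nonempty) (auto intro: dominated_extension_Union_chain)
  then obtain Gm where Gm: "dominated_extension p M f Gm"
    and max: "\<And>G. dominated_extension p M f G \<Longrightarrow> Gm \<subseteq> G \<Longrightarrow> G = Gm"
    by blast
  have sub: "subspace Gm" and sv: "single_valued Gm" and ext: "\<forall>v\<in>M. (v, f v) \<in> Gm"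
    and bound: "\<forall>(v, r)\<in>Gm. r \<le> p v"
    using Gm unfolding dominated_extension_def by auto
  have total: "v \<in> Domain Gm" for v
  proof (rule ccontr)
    assume "v \<notin> Domain Gm"
    then obtain G where "dominated_extension p M f G" "Gm \<subset> G"
      using dominated_extension_enlarge[OF p Gm] by blast
    with max show False
      by blast
  qed
  define g where "g v = (THE r. (v, r) \<in> Gm)" for v
  have g_eq: "g v = r" if "(v, r) \<in> Gm" for v r
    unfolding g_def using that single_valuedD[OF sv] by blast
  have graph: "(v, g v) \<in> Gm" for v
    using total[of v] g_eq by blast
  have "linear g"
  proof (rule linearI)
    show "g (v + w) = g v + g w" for v w
      using g_eq subspace_add[OF sub graph graph] by simp
    show "g (c *\<^sub>R v) = c *\<^sub>R g v" for c v
      using g_eq subspace_scale[OF sub graph] by simp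
  qed
  moreover have "\<forall>v\<in>M. g v = f v"
    using ext g_eq by blast
  moreover have "\<forall>v. g v \<le> p v"
    using bound graph by blast
  ultimately show ?thesis
    by blast
qed

corollary hahn_banach_norm:
  fixes f :: "'a::real_normed_vector \<Rightarrow> real"
  assumes M: "subspace M" and f: "linear f" and "0 \<le> c" and dom: "\<forall>v\<in>M. f v \<le> c * norm v"
  shows "\<exists>\<phi>. (\<forall>v\<in>M. blinfun_apply \<phi> v = f v) \<and> norm \<phi> \<le> c"
proof -
  obtain g where g: "linear g" and ext: "\<forall>v\<in>M. g v = f v" and bound: "\<And>v. g v \<le> c * norm v"
    using hahn_banach_sublinear[OF sublinear_scaled_norm[OF \<open>0 \<le> c\<close>] M f dom] by blast
  have abs_bound: "norm (g v) \<le> c * norm v" for v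
    using bound[of v] bound[of "- v"] linear_neg[OF g, of v] by auto
  then have "bounded_linear g"
    using g by (intro bounded_linear_intro[where K = c]) (auto simp: linear_add linear_scale mult.commute)
  then have "(\<forall>v\<in>M. blinfun_apply (Blinfun g) v = f v) \<and> norm (Blinfun g) \<le> c"
    using ext abs_bound \<open>0 \<le> c\<close> by (simp add: bounded_linear_Blinfun_apply norm_blinfun_bound)
  then show ?thesis ..
qed

definition dual_dist :: "('x \<Rightarrow> ('y::real_normed_vector \<Rightarrow>\<^sub>L real)) \<Rightarrow> 'x set \<Rightarrow> 'x \<Rightarrow> real" where
  "dual_dist T S y = (SUP \<nu>\<in>{\<nu>\<in>pre_annihilator T S. norm \<nu> \<le> 1}. blinfun_apply (T y) \<nu>)"

lemma is_predual_isoD: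
  assumes "is_predual_iso T"
  shows is_predual_iso_linear: "linear T"
    and is_predual_iso_surj: "surj T"
    and is_predual_iso_norm: "norm (T x) = norm x"
  using assms unfolding is_predual_iso_def by (auto simp: bij_is_surj)

lemma subspace_pre_annihilator: "subspace (pre_annihilator T S)"
  unfolding subspace_def pre_annihilator_def
  by (simp add: blinfun.zero_right blinfun.add_right blinfun.scaleR_right)

lemma subset_annihilator_pre_annihilator: "S \<subseteq> annihilator T (pre_annihilator T S)"
  unfolding annihilator_def pre_annihilator_def by auto

lemma zero_in_pre_annihilator_ball: "0 \<in> {\<nu>\<in>pre_annihilator T S. norm \<nu> \<le> 1}"
  using subspace_0[OF subspace_pre_annihilator] by simp

lemma blinfun_apply_le_norm:
  fixes \<phi> :: "'a::real_normed_vector \<Rightarrow>\<^sub>L real"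
  shows "blinfun_apply \<phi> \<nu> \<le> norm \<phi> * norm \<nu>"
  using norm_blinfun[of \<phi> \<nu>] by simp

lemma bdd_above_pairing_ball:
  fixes \<phi> :: "'a::real_normed_vector \<Rightarrow>\<^sub>L real"
  shows "bdd_above ((\<lambda>\<nu>. blinfun_apply \<phi> \<nu>) ` {\<nu>\<in>A. norm \<nu> \<le> 1})"
proof (rule bdd_aboveI2)
  fix \<nu> assume "\<nu> \<in> {\<nu>\<in>A. norm \<nu> \<le> 1}"
  then have "norm \<phi> * norm \<nu> \<le> norm \<phi>"
    using mult_left_le[of "norm \<nu>" "norm \<phi>"] by simp
  then show "blinfun_apply \<phi> \<nu> \<le> norm \<phi>"
    using blinfun_apply_le_norm[of \<phi> \<nu>] by simp
qed

lemma dual_dist_nonneg: "0 \<le> dual_dist T S y"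
  unfolding dual_dist_def
  using cSUP_upper[OF zero_in_pre_annihilator_ball bdd_above_pairing_ball]
  by (simp add: blinfun.zero_right)

lemma pairing_le_dual_dist:
  assumes "\<nu> \<in> pre_annihilator T S"
  shows "blinfun_apply (T y) \<nu> \<le> dual_dist T S y * norm \<nu>"
proof (cases "\<nu> = 0")
  case True
  then show ?thesis by (simp add: blinfun.zero_right)
next
  case False
  have "inverse (norm \<nu>) *\<^sub>R \<nu> \<in> {\<nu>\<in>pre_annihilator T S. norm \<nu> \<le> 1}"
    using subspace_scale[OF subspace_pre_annihilator assms] False by simp
  then have "inverse (norm \<nu>) * blinfun_apply (T y) \<nu> \<le> dual_dist T S y"
    unfolding dual_dist_def using bdd_above_pairing_ball
    by (intro cSUP_upper2) (auto simp: blinfun.scaleR_right)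
  then show ?thesis
    using False by (simp add: field_simps)
qed

lemma dual_dist_le_dist:
  assumes "is_predual_iso T" and "x \<in> S"
  shows "dual_dist T S y \<le> norm (y - x)"
  unfolding dual_dist_def
proof (rule cSUP_least)
  show "{\<nu>\<in>pre_annihilator T S. norm \<nu> \<le> 1} \<noteq> {}"
    using zero_in_pre_annihilator_ball by blast
next
  fix \<nu> assume \<nu>: "\<nu> \<in> {\<nu>\<in>pre_annihilator T S. norm \<nu> \<le> 1}"
  then have "blinfun_apply (T y) \<nu> = blinfun_apply (T (y - x)) \<nu>"
    using \<open>x \<in> S\<close> is_predual_iso_linear[OF assms(1)]
    by (simp add: linear_diff blinfun.diff_left pre_annihilator_def)
  also have "\<dots> \<le> norm (T (y - x)) * norm \<nu>"
    by (rule blinfun_apply_le_norm)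
  also have "\<dots> \<le> norm (y - x)"
    using \<nu> mult_left_le[of "norm \<nu>" "norm (y - x)"] is_predual_iso_norm[OF assms(1)] by simp
  finally show "blinfun_apply (T y) \<nu> \<le> norm (y - x)" .
qed

lemma dual_dist_annihilator:
  assumes "y \<in> annihilator T (pre_annihilator T S)"
  shows "dual_dist T S y = 0"
proof -
  have "dual_dist T S y = (SUP \<nu>\<in>{\<nu>\<in>pre_annihilator T S. norm \<nu> \<le> 1}. 0)"
    unfolding dual_dist_def by (rule SUP_cong[OF refl]) (use assms in \<open>auto simp: annihilator_def\<close>)
  also have "\<dots> = 0"
    using zero_in_pre_annihilator_ball by (intro cSUP_const) blast
  finally show ?thesis .
qed

lemma annihilator_point_within_dual_dist:
  assumes "is_predual_iso T"
  shows "\<exists>z. norm z \<le> dual_dist T S y \<and> y - z \<in> annihilator T (pre_annihilator T S)"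
proof -
  have lin: "linear (blinfun_apply (T y))"
    using blinfun.bounded_linear_right bounded_linear.linear by blast
  have bound: "\<forall>\<nu>\<in>pre_annihilator T S. blinfun_apply (T y) \<nu> \<le> dual_dist T S y * norm \<nu>"
    by (simp add: pairing_le_dual_dist)
  from hahn_banach_norm[OF subspace_pre_annihilator lin dual_dist_nonneg bound]
  obtain \<phi> where \<phi>: "\<forall>\<nu>\<in>pre_annihilator T S. blinfun_apply \<phi> \<nu> = blinfun_apply (T y) \<nu>"
    and "norm \<phi> \<le> dual_dist T S y"
    by blast
  obtain z where z: "T z = \<phi>"
    using is_predual_iso_surj[OF assms] by (metis surjD)
  have "norm z \<le> dual_dist T S y"
    using \<open>norm \<phi> \<le> dual_dist T S y\<close> z is_predual_iso_norm[OF assms] by metis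
  moreover have "blinfun_apply (T (y - z)) \<nu> = 0" if "\<nu> \<in> pre_annihilator T S" for \<nu>
    using \<phi> that z is_predual_iso_linear[OF assms] by (simp add: linear_diff blinfun.diff_left)
  then have "y - z \<in> annihilator T (pre_annihilator T S)"
    unfolding annihilator_def by blast
  ultimately show ?thesis
    by blast
qed

lemma best_approximation_if_annihilator_eq:
  assumes T: "is_predual_iso T" and S_eq: "annihilator T (pre_annihilator T S) = S"
  shows "\<exists>x\<in>S. (\<forall>x'\<in>S. norm (y - x) \<le> norm (y - x')) \<and> norm (y - x) = dual_dist T S y"
proof -
  obtain z where z: "norm z \<le> dual_dist T S y" and "y - z \<in> S"
    using annihilator_point_within_dual_dist[OF T] S_eq by blast
  have lower: "dual_dist T S y \<le> norm (y - x')" if "x' \<in> S" for x'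
    using dual_dist_le_dist[OF T that] .
  have "norm (y - (y - z)) = dual_dist T S y"
    using z lower[OF \<open>y - z \<in> S\<close>] by simp
  moreover have "\<forall>x'\<in>S. norm (y - (y - z)) \<le> norm (y - x')"
    using order_trans[OF z lower] by simp
  ultimately show ?thesis
    using \<open>y - z \<in> S\<close> by blast
qed

theorem theorem4:
  fixes T :: "'x::real_normed_vector \<Rightarrow> ('y::real_normed_vector \<Rightarrow>\<^sub>L real)"
    and S :: "'x set"
  assumes "is_predual_iso T"
    and "subspace S" and "closed S"
  shows "(\<forall>y. \<exists>x\<in>S. (\<forall>x'\<in>S. norm (y - x) \<le> norm (y - x')) \<and>
            norm (y - x) = (SUP \<nu>\<in>{\<nu>\<in>pre_annihilator T S. norm \<nu> \<le> 1}. blinfun_apply (T y) \<nu>))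
         \<longleftrightarrow> annihilator T (pre_annihilator T S) = S"
  unfolding dual_dist_def[symmetric]
proof
  assume best: "\<forall>y. \<exists>x\<in>S. (\<forall>x'\<in>S. norm (y - x) \<le> norm (y - x')) \<and> norm (y - x) = dual_dist T S y"
  show "annihilator T (pre_annihilator T S) = S"
  proof (rule equalityI[OF subsetI subset_annihilator_pre_annihilator])
    fix y assume "y \<in> annihilator T (pre_annihilator T S)"
    then have "dual_dist T S y = 0"
      by (rule dual_dist_annihilator)
    moreover obtain x where "x \<in> S" and "norm (y - x) = dual_dist T S y"
      using best by blast
    ultimately show "y \<in> S"
      by simp
  qed
qed (use best_approximation_if_annihilator_eq[OF assms(1)] in blast)

end
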